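(* Let $|\psi\rangle\in\mathcal{H}'$ be a pure state with $\langle\psi|\hat N^2|\psi\rangle<\infty$, and let $\{\mathcal{E}_\mu\}$ be a U(1)-invariant measurement such that for every outcome $\mu$ with $w_\mu:=\mathrm{Tr}\,\mathcal{E}_\mu(|\psi\rangle\langle\psi|)>0$ one has $\mathcal{E}_\mu(|\psi\rangle\langle\psi|)=w_\mu|\phi_\mu\rangle\langle\phi_\mu|$ for a pure state $|\phi_\mu\rangle$ with $\langle\phi_\mu|\hat N^2|\phi_\mu\rangle<\infty$. Then $$\sum_\mu w_\mu V(|\phi_\mu\rangle)\le V(|\psi\rangle),\qquad V(|\chi\rangle):=4\big(\langle\chi|\hat N^2|\chi\rangle-\langle\chi|\hat N|\chi\rangle^2\big).$$ That is, $V$ is an ensemble U(1)-frameness monotone.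
   Context: Let $\mathcal{H}'$ be the Hilbert space with orthonormal basis $\{|n\rangle: n=0,1,2,\dots\}$, $\hat N=\sum_n n|n\rangle\langle n|$, and U(1) acts by $T(\phi)=e^{i\phi\hat N}$. A U(1)-invariant operation is a completely positive, trace-nonincreasing linear map $\mathcal{E}$ on operators on $\mathcal{H}'$ with $\mathcal{E}(T(\phi)XT(\phi)^\dagger)=T(\phi)\mathcal{E}(X)T(\phi)^\dagger$ for all $\phi,X$. A U(1)-invariant measurement is a (countable) family $\{\mathcal{E}_\mu\}$ of U(1)-invariant operations whose sum $\sum_\mu\mathcal{E}_\mu$ is trace-preserving; outcome $\mu$ occurs on input $\rho$ with probability $\mathrm{Tr}\,\mathcal{E}_\mu(\rho)$. *)

theory Defs
  imports "HOL-Analysis.Analysis"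
begin

text \<open>Operators on H' = l2(nat) are represented by their (infinite) matrices
  in the number basis |n>, vectors by their coefficient sequences.\<close>

type_synonym mat = "nat \<Rightarrow> nat \<Rightarrow> complex"

definition pos_mat :: "mat \<Rightarrow> bool" where
  "pos_mat X \<longleftrightarrow> (\<forall>S v. finite S \<longrightarrow>
     (let q = (\<Sum>i\<in>S. \<Sum>j\<in>S. cnj (v i) * X i j * v j) in Im q = 0 \<and> Re q \<ge> 0))"

text \<open>Positive trace-class operators (positivity plus summable diagonal implies
  boundedness and trace class).\<close>
definition pos_tc :: "mat \<Rightarrow> bool" where
  "pos_tc X \<longleftrightarrow> pos_mat X \<and> summable (\<lambda>n. Re (X n n))"

definition trace_class :: "mat set" where
  "trace_class = {X. \<exists>A B C D. pos_tc A \<and> pos_tc B \<and> pos_tc C \<and> pos_tc D \<and>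
      X = (\<lambda>i j. (A i j - B i j) + \<i> * (C i j - D i j))}"

definition trace :: "mat \<Rightarrow> complex" where
  "trace X = (\<Sum>\<^sub>\<infinity>n. X n n)"

text \<open>Positivity of a k x k block operator on C^k (x) H'.\<close>
definition pos_block :: "nat \<Rightarrow> (nat \<Rightarrow> nat \<Rightarrow> mat) \<Rightarrow> bool" where
  "pos_block k Y \<longleftrightarrow> (\<forall>S v. finite S \<longrightarrow>
     (let q = (\<Sum>a<k. \<Sum>b<k. \<Sum>i\<in>S. \<Sum>j\<in>S. cnj (v a i) * Y a b i j * v b j)
      in Im q = 0 \<and> Re q \<ge> 0))"

definition linear_tc :: "(mat \<Rightarrow> mat) \<Rightarrow> bool" where
  "linear_tc E \<longleftrightarrow>
     (\<forall>X\<in>trace_class. E X \<in> trace_class) \<and>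
     (\<forall>X\<in>trace_class. \<forall>Y\<in>trace_class. E (\<lambda>i j. X i j + Y i j) = (\<lambda>i j. E X i j + E Y i j)) \<and>
     (\<forall>X\<in>trace_class. \<forall>c. E (\<lambda>i j. c * X i j) = (\<lambda>i j. c * E X i j))"

text \<open>Complete positivity: id_k (x) E maps positive (trace-class) block operators
  to positive block operators, for every k.\<close>
definition completely_positive :: "(mat \<Rightarrow> mat) \<Rightarrow> bool" where
  "completely_positive E \<longleftrightarrow>
     (\<forall>k Y. pos_block k Y \<and> (\<forall>a<k. pos_tc (Y a a)) \<longrightarrow> pos_block k (\<lambda>a b. E (Y a b)))"

definition trace_nonincreasing :: "(mat \<Rightarrow> mat) \<Rightarrow> bool" where
  "trace_nonincreasing E \<longleftrightarrow> (\<forall>X. pos_tc X \<longrightarrow> Re (trace (E X)) \<le> Re (trace X))"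

text \<open>T(phi) X T(phi)^dagger with T(phi) = exp(i phi N).\<close>
definition rot :: "real \<Rightarrow> mat \<Rightarrow> mat" where
  "rot \<phi> X = (\<lambda>m n. cis (\<phi> * real m) * X m n * cis (- \<phi> * real n))"

definition u1_operation :: "(mat \<Rightarrow> mat) \<Rightarrow> bool" where
  "u1_operation E \<longleftrightarrow> linear_tc E \<and> completely_positive E \<and> trace_nonincreasing E \<and>
     (\<forall>\<phi>. \<forall>X\<in>trace_class. E (rot \<phi> X) = rot \<phi> (E X))"

definition u1_measurement :: "('m::countable \<Rightarrow> mat \<Rightarrow> mat) \<Rightarrow> bool" where
  "u1_measurement E \<longleftrightarrow> (\<forall>\<mu>. u1_operation (E \<mu>)) \<and>
     (\<forall>X\<in>trace_class. ((\<lambda>\<mu>. trace (E \<mu> X)) has_sum trace X) UNIV)"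

definition unit_vec :: "(nat \<Rightarrow> complex) \<Rightarrow> bool" where
  "unit_vec x \<longleftrightarrow> ((\<lambda>n. (cmod (x n))\<^sup>2) has_sum 1) UNIV"

definition fin_N2 :: "(nat \<Rightarrow> complex) \<Rightarrow> bool" where
  "fin_N2 x \<longleftrightarrow> (\<lambda>n. (real n)\<^sup>2 * (cmod (x n))\<^sup>2) summable_on UNIV"

definition proj :: "(nat \<Rightarrow> complex) \<Rightarrow> mat" where
  "proj x = (\<lambda>m n. x m * cnj (x n))"

definition expN :: "(nat \<Rightarrow> complex) \<Rightarrow> real" where
  "expN x = (\<Sum>\<^sub>\<infinity>n. real n * (cmod (x n))\<^sup>2)"

definition expN2 :: "(nat \<Rightarrow> complex) \<Rightarrow> real" where
  "expN2 x = (\<Sum>\<^sub>\<infinity>n. (real n)\<^sup>2 * (cmod (x n))\<^sup>2)"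

definition Vfr :: "(nat \<Rightarrow> complex) \<Rightarrow> real" where
  "Vfr x = 4 * (expN2 x - (expN x)\<^sup>2)"

definition outcome_weight :: "('m \<Rightarrow> mat \<Rightarrow> mat) \<Rightarrow> (nat \<Rightarrow> complex) \<Rightarrow> 'm \<Rightarrow> real" where
  "outcome_weight E \<psi> \<mu> = Re (trace (E \<mu> (proj \<psi>)))"

end

theory Submission
  imports Defs "HOL-Real_Asymp.Real_Asymp"
begin

text \<open>Write G_x(t) = \<langle>x| e^(-itN) |x\<rangle> = \<Sum>_n |x_n|^2 e^(-itn) for the characteristic function of the
  number distribution of x, and Var(x) = V(x)/4 for its variance. Then 1 - |G_x(t)| \<le> t^2 Var(x)/2,
  while (1 - |G_x(t)|^2)/t^2 \<rightarrow> Var(x) as t \<rightarrow> 0.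

  Complete positivity of \<E>_\<mu>, applied to the rank-one block operator built from \<psi> and e^(itN) \<psi>,
  together with U(1)-covariance, yields a positive block whose diagonal corners are
  w_\<mu> |\<phi>_\<mu>\<rangle>\<langle>\<phi>_\<mu>| and its rotation; positivity forces the off-diagonal corner to be
  \<lambda>_\<mu> |\<phi>_\<mu>\<rangle>\<langle>e^(itN) \<phi>_\<mu>| with |\<lambda>_\<mu>| \<le> w_\<mu>. Taking traces and summing over \<mu> (the
  measurement is trace preserving) gives |G_\<psi>(t)| \<le> \<Sum>_\<mu> w_\<mu> |G_\<phi>_\<mu>(t)|. As 1 - c^2 \<le> 2(1 - c),
  summing over any finite set of outcomes gives
  \<Sum>_\<mu> w_\<mu> (1 - |G_\<phi>_\<mu>(t)|^2)/t^2 \<le> 2(1 - |G_\<psi>(t)|)/t^2 \<le> Var(\<psi>), and t \<rightarrow> 0 proves the claim.\<close>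

section \<open>Characteristic function of a distribution on the naturals\<close>

lemma one_minus_cos_le: "1 - cos (t::real) \<le> t\<^sup>2 / 2"
proof -
  have "cos t = 1 - 2 * sin (t/2) ^ 2" using cos_double_sin[of "t/2"] by simp
  moreover have "sin (t/2) ^ 2 \<le> (t/2)^2"
    using abs_sin_x_le_abs_x[of "t/2"] by (metis abs_ge_zero power2_abs power_mono)
  ultimately show ?thesis by (simp add: power_divide)
qed

lemma tendsto_one_minus_cos_over_square: "((\<lambda>t::real. (1 - cos (t*k))/t\<^sup>2) \<longlongrightarrow> k*k/2) (at 0)"
proof (cases "k = 0")
  case False then show ?thesis by real_asymp
qed simp

lemma tendsto_sin_over: "((\<lambda>t::real. sin (t*k)/t) \<longlongrightarrow> k) (at 0)"
proof (cases "k = 0")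
  case False then show ?thesis by real_asymp
qed simp

lemma linear_coeff_zero_if_quadratic_nonneg:
  fixes \<alpha> \<beta> :: real
  assumes nonneg: "\<And>s. 0 \<le> s*\<alpha> + s\<^sup>2*\<beta>"
  shows "\<alpha> = 0"
proof (rule ccontr)
  assume "\<alpha> \<noteq> 0"
  have bound: "\<bar>\<alpha>\<bar> \<le> t * \<bar>\<beta>\<bar>" if t: "t > 0" for t
  proof -
    have "t*\<alpha> \<le> t\<^sup>2*\<beta>" "-(t*\<alpha>) \<le> t\<^sup>2*\<beta>"
      using nonneg[of t] nonneg[of "-t"] by simp_all
    then have "t*\<bar>\<alpha>\<bar> \<le> t\<^sup>2*\<beta>" using t by (simp add: abs_if)
    also have "t\<^sup>2*\<beta> \<le> t\<^sup>2*\<bar>\<beta>\<bar>" by (simp add: mult_left_mono)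
    finally have "t * \<bar>\<alpha>\<bar> \<le> t * (t * \<bar>\<beta>\<bar>)" by (simp add: power2_eq_square)
    then show ?thesis using t by simp
  qed
  define t where "t = \<bar>\<alpha>\<bar> / (2 * (\<bar>\<beta>\<bar> + 1))"
  have "t > 0" using \<open>\<alpha> \<noteq> 0\<close> unfolding t_def by (simp add: add_pos_nonneg)
  moreover have "t * \<bar>\<beta>\<bar> \<le> \<bar>\<alpha>\<bar> / 2"
    unfolding t_def by (simp add: field_simps mult_left_mono)
  ultimately show False using bound \<open>\<alpha> \<noteq> 0\<close> by fastforce
qed

definition char_fun :: "(nat \<Rightarrow> real) \<Rightarrow> real \<Rightarrow> complex" where
  "char_fun q t = (\<Sum>\<^sub>\<infinity>n. complex_of_real (q n) * cis (- t * real n))"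

locale finite_variance_distribution =
  fixes q :: "nat \<Rightarrow> real"
  assumes nonneg: "0 \<le> q n"
    and has_sum_one: "(q has_sum 1) UNIV"
    and summable_second_moment: "summable (\<lambda>n. (real n)\<^sup>2 * q n)"
begin

definition mean :: real where "mean = (\<Sum>n. real n * q n)"

definition variance :: real where "variance = (\<Sum>n. q n * (real n - mean)\<^sup>2)"

definition cos_moment :: "real \<Rightarrow> real" where
  "cos_moment t = (\<Sum>n. q n * cos (t * (real n - mean)))"

definition sin_moment :: "real \<Rightarrow> real" where
  "sin_moment t = (\<Sum>n. q n * sin (t * (real n - mean)))"

lemma sums_one: "q sums 1"
  using has_sum_one by (rule has_sum_imp_sums)

lemma summable: "summable q"
  using sums_one by (rule sums_summable)

lemma summable_first_moment: "summable (\<lambda>n. real n * q n)"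
proof (rule summable_comparison_test[OF _ summable_add[OF summable_second_moment summable]])
  have "real n * q n \<le> ((real n)\<^sup>2 + 1) * q n" for n
    using zero_le_power2[of "real n - 1/2"]
    by (intro mult_right_mono nonneg) (simp add: power2_eq_square algebra_simps)
  then show "\<exists>N. \<forall>n\<ge>N. norm (real n * q n) \<le> (real n)\<^sup>2 * q n + q n"
    using nonneg by (simp add: algebra_simps)
qed

lemma sums_mean: "(\<lambda>n. real n * q n) sums mean"
  unfolding mean_def using summable_first_moment by (rule summable_sums)

lemma summable_variance: "summable (\<lambda>n. q n * (real n - mean)\<^sup>2)"
  and variance_eq: "variance = (\<Sum>n. (real n)\<^sup>2 * q n) - mean\<^sup>2"
proof -
  have expand: "(\<lambda>n. q n * (real n - mean)\<^sup>2)
      = (\<lambda>n. ((real n)\<^sup>2 * q n - 2*mean * (real n * q n)) + mean\<^sup>2 * q n)"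
    by (auto simp: fun_eq_iff power2_eq_square algebra_simps)
  have "(\<lambda>n. q n * (real n - mean)\<^sup>2) sums
      (((\<Sum>n. (real n)\<^sup>2 * q n) - 2*mean*mean) + mean\<^sup>2 * 1)"
    unfolding expand
    by (intro sums_add sums_diff sums_mult sums_one sums_mean summable_sums summable_second_moment)
  then show "summable (\<lambda>n. q n * (real n - mean)\<^sup>2)"
    and "variance = (\<Sum>n. (real n)\<^sup>2 * q n) - mean\<^sup>2"
    unfolding variance_def by (auto simp: sums_iff power2_eq_square)
qed

lemma variance_nonneg: "0 \<le> variance"
  unfolding variance_def by (intro suminf_nonneg summable_variance) (simp add: nonneg)

lemma centered_first_moment: "(\<Sum>n. q n * (real n - mean)) = 0"
proof -
  have "(\<lambda>n. real n * q n - mean * q n) sums (mean - mean * 1)"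
    by (intro sums_diff sums_mult sums_one sums_mean)
  then show ?thesis by (simp add: algebra_simps sums_iff)
qed

lemma summable_cos_moment: "summable (\<lambda>n. q n * cos (t * (real n - mean)))"
  and summable_sin_moment: "summable (\<lambda>n. q n * sin (t * (real n - mean)))"
  by (rule summable_comparison_test[OF _ summable];
      auto simp: abs_mult nonneg intro!: mult_left_le)+

lemma cos_moment_lower: "1 - t\<^sup>2 * variance / 2 \<le> cos_moment t"
proof -
  have "(\<lambda>n. q n - (t\<^sup>2/2) * (q n * (real n - mean)\<^sup>2)) sums (1 - (t\<^sup>2/2) * variance)"
    unfolding variance_def by (intro sums_diff sums_mult sums_one summable_sums summable_variance)
  moreover have "q n - (t\<^sup>2/2) * (q n * (real n - mean)\<^sup>2) \<le> q n * cos (t * (real n - mean))" for n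
  proof -
    have "q n * (1 - (t*(real n - mean))\<^sup>2/2) \<le> q n * cos (t * (real n - mean))"
      using one_minus_cos_le[of "t*(real n - mean)"] by (intro mult_left_mono nonneg) simp
    then show ?thesis by (simp add: power2_eq_square field_simps)
  qed
  ultimately show ?thesis
    unfolding cos_moment_def using summable_cos_moment
    by (metis (no_types, lifting) mult.commute sums_le sums_summable summable_sums times_divide_eq_right)
qed

lemma tendsto_cos_moment_deficit: "((\<lambda>t. (1 - cos_moment t) / t\<^sup>2) \<longlongrightarrow> variance/2) (at 0)"
proof -
  have eq: "(1 - cos_moment t) / t\<^sup>2 = (\<Sum>n. q n * ((1 - cos (t * (real n - mean))) / t\<^sup>2))" for t
  proof -
    have "(\<lambda>n. (q n - q n * cos (t * (real n - mean))) / t\<^sup>2) sums ((1 - cos_moment t) / t\<^sup>2)"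
      unfolding cos_moment_def
      by (intro sums_divide sums_diff sums_one summable_sums summable_cos_moment)
    then show ?thesis by (simp add: sums_unique right_diff_distrib)
  qed
  have lim: "((\<lambda>t. \<Sum>n. q n * ((1 - cos (t * (real n - mean))) / t\<^sup>2)) \<longlongrightarrow>
        (\<Sum>n. q n * ((real n - mean) * (real n - mean) / 2))) (at 0)"
  proof (rule tannerys_theorem[THEN conjunct2, THEN conjunct2])
    show "((\<lambda>t. q n * ((1 - cos (t * (real n - mean))) / t\<^sup>2))
        \<longlongrightarrow> q n * ((real n - mean) * (real n - mean) / 2)) (at 0)" for n
      by (intro tendsto_intros tendsto_one_minus_cos_over_square)
    show "\<forall>\<^sub>F (n, t) in at_top \<times>\<^sub>F at 0.
        norm (q n * ((1 - cos (t * (real n - mean))) / t\<^sup>2)) \<le> q n * (real n - mean)\<^sup>2 / 2"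
    proof (rule always_eventually, clarify)
      fix n t
      have "(1 - cos (t * (real n - mean))) / t\<^sup>2 \<le> (real n - mean)\<^sup>2 / 2"
        using one_minus_cos_le[of "t * (real n - mean)"]
        by (cases "t = 0") (simp_all add: divide_simps power_mult_distrib mult.commute)
      from mult_left_mono[OF this nonneg[of n]]
      show "norm (q n * ((1 - cos (t * (real n - mean))) / t\<^sup>2)) \<le> q n * (real n - mean)\<^sup>2 / 2"
        using nonneg[of n] by (simp add: abs_mult)
    qed
    show "summable (\<lambda>n. q n * (real n - mean)\<^sup>2 / 2)"
      using summable_variance by (rule summable_divide)
  qed simp
  have half_variance: "(\<Sum>n. q n * ((real n - mean) * (real n - mean) / 2)) = variance/2"
    using suminf_divide[OF summable_variance, of 2] by (simp add: variance_def power2_eq_square)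
  show ?thesis unfolding eq using lim by (simp only: half_variance)
qed

lemma tendsto_sin_moment_over: "((\<lambda>t. sin_moment t / t) \<longlongrightarrow> 0) (at 0)"
proof -
  have eq: "sin_moment t / t = (\<Sum>n. q n * (sin (t * (real n - mean)) / t))" for t
    unfolding sin_moment_def using sums_divide[OF summable_sums[OF summable_sin_moment[of t]], of t]
    by (simp add: sums_unique)
  have "((\<lambda>t. \<Sum>n. q n * (sin (t * (real n - mean)) / t)) \<longlongrightarrow> (\<Sum>n. q n * (real n - mean))) (at 0)"
  proof (rule tannerys_theorem[THEN conjunct2, THEN conjunct2])
    show "((\<lambda>t. q n * (sin (t * (real n - mean)) / t)) \<longlongrightarrow> q n * (real n - mean)) (at 0)" for n
      by (intro tendsto_intros tendsto_sin_over)
    show "\<forall>\<^sub>F (n, t) in at_top \<times>\<^sub>F at 0.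
        norm (q n * (sin (t * (real n - mean)) / t)) \<le> q n * (real n - mean)\<^sup>2 + q n"
    proof (rule always_eventually, clarify)
      fix n t
      have "\<bar>sin (t * (real n - mean)) / t\<bar> \<le> \<bar>real n - mean\<bar>"
        using abs_sin_x_le_abs_x[of "t * (real n - mean)"]
        by (cases "t = 0") (simp_all add: divide_simps abs_mult mult.commute)
      also have "\<bar>real n - mean\<bar> \<le> (real n - mean)\<^sup>2 + 1"
        using zero_le_power2[of "\<bar>real n - mean\<bar> - 1/2"] by (simp add: power2_eq_square algebra_simps)
      finally have "\<bar>sin (t * (real n - mean)) / t\<bar> \<le> (real n - mean)\<^sup>2 + 1" .
      from mult_left_mono[OF this nonneg[of n]]
      show "norm (q n * (sin (t * (real n - mean)) / t)) \<le> q n * (real n - mean)\<^sup>2 + q n"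
        using nonneg[of n] by (simp add: abs_mult algebra_simps)
    qed
    show "summable (\<lambda>n. q n * (real n - mean)\<^sup>2 + q n)"
      using summable_variance summable by (rule summable_add)
  qed simp
  then show ?thesis by (simp add: eq centered_first_moment)
qed

lemma tendsto_cos_moment: "(cos_moment \<longlongrightarrow> 1) (at 0)"
proof -
  have "((\<lambda>t. 1 - t\<^sup>2 * ((1 - cos_moment t) / t\<^sup>2)) \<longlongrightarrow> 1 - 0\<^sup>2 * (variance/2)) (at 0)"
    by (intro tendsto_intros tendsto_cos_moment_deficit)
  moreover have "\<forall>\<^sub>F t in at 0. 1 - t\<^sup>2 * ((1 - cos_moment t) / t\<^sup>2) = cos_moment t"
    by (auto simp: eventually_at_filter)
  ultimately show ?thesis by (simp add: tendsto_cong)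
qed

lemma has_sum_centered_char_fun:
  "((\<lambda>n. complex_of_real (q n) * cis (- t * (real n - mean))) has_sum (cis (t * mean) * char_fun q t)) UNIV"
proof -
  have "q summable_on UNIV"
    using has_sum_one by (auto simp: summable_on_def)
  then have "(\<lambda>n. norm (complex_of_real (q n) * cis (- t * real n))) summable_on UNIV"
    by (simp add: norm_mult nonneg)
  then have "((\<lambda>n. complex_of_real (q n) * cis (- t * real n)) has_sum char_fun q t) UNIV"
    unfolding char_fun_def by (rule has_sum_infsum[OF abs_summable_summable])
  then have "((\<lambda>n. cis (t * mean) * (complex_of_real (q n) * cis (- t * real n)))
      has_sum (cis (t * mean) * char_fun q t)) UNIV"
    by (rule has_sum_cmult_right)
  moreover have "cis (t * mean) * (complex_of_real (q n) * cis (- t * real n))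
      = complex_of_real (q n) * cis (- t * (real n - mean))" for n
  proof -
    have "cis (t * mean) * cis (- t * real n) = cis (- t * (real n - mean))"
      by (subst cis_mult) (simp add: algebra_simps)
    then show ?thesis by (metis mult.left_commute)
  qed
  ultimately show ?thesis by (simp only:)
qed

lemma re_centered_char_fun: "Re (cis (t * mean) * char_fun q t) = cos_moment t"
proof -
  have "((\<lambda>n. q n * cos (t * (real n - mean))) has_sum Re (cis (t * mean) * char_fun q t)) UNIV"
    using has_sum_Re[OF has_sum_centered_char_fun] by simp
  from sums_unique[OF has_sum_imp_sums[OF this]] show ?thesis
    unfolding cos_moment_def by simp
qed

lemma im_centered_char_fun: "Im (cis (t * mean) * char_fun q t) = - sin_moment t"
proof -
  have "((\<lambda>n. - (q n * sin (t * (real n - mean)))) has_sum Im (cis (t * mean) * char_fun q t)) UNIV"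
    using has_sum_Im[OF has_sum_centered_char_fun] by simp
  from sums_unique[OF has_sum_imp_sums[OF this]] show ?thesis
    unfolding sin_moment_def using suminf_minus[OF summable_sin_moment] by simp
qed

lemma norm_char_fun_squared: "(cmod (char_fun q t))\<^sup>2 = (cos_moment t)\<^sup>2 + (sin_moment t)\<^sup>2"
proof -
  have "(cmod (char_fun q t))\<^sup>2 = (cmod (cis (t * mean) * char_fun q t))\<^sup>2" by (simp add: norm_mult)
  also have "\<dots> = (Re (cis (t * mean) * char_fun q t))\<^sup>2 + (Im (cis (t * mean) * char_fun q t))\<^sup>2"
    by (rule cmod_power2)
  finally show ?thesis by (simp only: re_centered_char_fun im_centered_char_fun power2_minus)
qed

lemma norm_char_fun_le_1: "cmod (char_fun q t) \<le> 1"
proof -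
  have "cmod (cis (t * mean) * char_fun q t) \<le> 1"
    by (rule norm_infsum_le[OF has_sum_centered_char_fun has_sum_one]) (simp add: norm_mult nonneg)
  then show ?thesis by (simp add: norm_mult)
qed

lemma one_minus_norm_char_fun_le: "1 - cmod (char_fun q t) \<le> t\<^sup>2 * variance / 2"
proof -
  have "cos_moment t \<le> sqrt ((cos_moment t)\<^sup>2 + (sin_moment t)\<^sup>2)" by (rule real_le_rsqrt) simp
  then have "cos_moment t \<le> cmod (char_fun q t)"
    by (simp flip: norm_char_fun_squared)
  then show ?thesis using cos_moment_lower[of t] by linarith
qed

lemma tendsto_norm_char_fun_deficit: "((\<lambda>t. (1 - (cmod (char_fun q t))\<^sup>2) / t\<^sup>2) \<longlongrightarrow> variance) (at 0)"
proof -
  have "((\<lambda>t. ((1 - cos_moment t) / t\<^sup>2) * (1 + cos_moment t) - (sin_moment t / t)\<^sup>2)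
      \<longlongrightarrow> (variance/2) * (1 + 1) - 0\<^sup>2) (at 0)"
    by (intro tendsto_intros tendsto_cos_moment_deficit tendsto_cos_moment tendsto_sin_moment_over)
  moreover have "\<forall>\<^sub>F t in at 0. ((1 - cos_moment t) / t\<^sup>2) * (1 + cos_moment t) - (sin_moment t / t)\<^sup>2
      = (1 - ((cos_moment t)\<^sup>2 + (sin_moment t)\<^sup>2)) / t\<^sup>2"
    by (auto simp: eventually_at_filter divide_simps power2_eq_square algebra_simps)
  ultimately show ?thesis unfolding norm_char_fun_squared by (simp add: tendsto_cong)
qed

end

section \<open>Positive and trace-class matrices\<close>

definition square_summable :: "(nat \<Rightarrow> complex) \<Rightarrow> bool" where
  "square_summable z \<longleftrightarrow> (\<lambda>n. (cmod (z n))\<^sup>2) summable_on UNIV"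

definition sesq :: "nat set \<Rightarrow> (nat \<Rightarrow> complex) \<Rightarrow> mat \<Rightarrow> (nat \<Rightarrow> complex) \<Rightarrow> complex" where
  "sesq S u X v = (\<Sum>i\<in>S. \<Sum>j\<in>S. cnj (u i) * X i j * v j)"

lemma pos_mat_iff_sesq: "pos_mat X \<longleftrightarrow> (\<forall>S v. finite S \<longrightarrow> 0 \<le> sesq S v X v)"
  by (auto simp: pos_mat_def sesq_def less_eq_complex_def Let_def)

lemma pos_block_iff_sesq:
  "pos_block k Y \<longleftrightarrow> (\<forall>S v. finite S \<longrightarrow> 0 \<le> (\<Sum>a<k. \<Sum>b<k. sesq S (v a) (Y a b) (v b)))"
  by (auto simp: pos_block_def sesq_def less_eq_complex_def Let_def sum.swap[of _ S "{..<k}"])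

lemma sesq_outer:
  "sesq S u (\<lambda>i j. x i * cnj (y j)) v = (\<Sum>i\<in>S. cnj (u i) * x i) * cnj (\<Sum>j\<in>S. cnj (v j) * y j)"
  unfolding sesq_def cnj_sum sum_product by (intro sum.cong refl) (simp add: mult_ac)

lemma sesq_scale: "sesq S (\<lambda>i. x * u i) X (\<lambda>j. y * v j) = cnj x * y * sesq S u X v"
  unfolding sesq_def sum_distrib_left by (intro sum.cong refl) (simp add: mult_ac)

lemma mult_cnj_nonneg: "0 \<le> z * cnj z"
  by (simp add: less_eq_complex_def)

lemma pos_mat_proj: "pos_mat (proj z)"
  unfolding pos_mat_iff_sesq proj_def sesq_outer by (blast intro: mult_cnj_nonneg)

lemma pos_block_outer: "pos_block k (\<lambda>a b i j. z a i * cnj (z b j))"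
proof -
  have "(\<Sum>a<k. \<Sum>b<k. sesq S (v a) (\<lambda>i j. z a i * cnj (z b j)) (v b))
      = (\<Sum>a<k. \<Sum>i\<in>S. cnj (v a i) * z a i) * cnj (\<Sum>a<k. \<Sum>i\<in>S. cnj (v a i) * z a i)" for S v
    unfolding sesq_outer cnj_sum sum_product ..
  then show ?thesis unfolding pos_block_iff_sesq by (simp only:) (blast intro: mult_cnj_nonneg)
qed

lemma pos_mat_diag_nonneg: "pos_mat X \<Longrightarrow> 0 \<le> X n n"
  unfolding pos_mat_iff_sesq sesq_def by (drule spec[of _ "{n}"], drule spec[of _ "\<lambda>_. 1"]) simp

lemma pos_tc_proj: "square_summable z \<Longrightarrow> pos_tc (proj z)"
  unfolding pos_tc_def square_summable_def
  by (intro conjI pos_mat_proj) (simp add: proj_def summable_on_imp_summable flip: complex_norm_square)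

lemma pos_tc_imp_trace_class:
  assumes "pos_tc X"
  shows "X \<in> trace_class"
proof -
  have "pos_tc (\<lambda>i j. 0)" by (simp add: pos_tc_def pos_mat_def)
  with assms show ?thesis
    unfolding trace_class_def by force
qed

lemma square_summable_lincomb:
  assumes "square_summable u" "square_summable v"
  shows "square_summable (\<lambda>n. a * u n + b * v n)"
  unfolding square_summable_def
proof (rule summable_on_comparison_test)
  show "(\<lambda>n. 2 * (cmod a)\<^sup>2 * (cmod (u n))\<^sup>2 + 2 * (cmod b)\<^sup>2 * (cmod (v n))\<^sup>2) summable_on UNIV"
    using assms unfolding square_summable_def by (intro summable_on_add summable_on_cmult_right)
  fix n
  have "(cmod (a * u n + b * v n))\<^sup>2 \<le> (cmod a * cmod (u n) + cmod b * cmod (v n))\<^sup>2"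
    by (metis norm_ge_zero norm_mult norm_triangle_ineq power_mono)
  also have "\<dots> \<le> 2 * (cmod a)\<^sup>2 * (cmod (u n))\<^sup>2 + 2 * (cmod b)\<^sup>2 * (cmod (v n))\<^sup>2"
    using zero_le_power2[of "cmod a * cmod (u n) - cmod b * cmod (v n)"]
    by (simp add: power2_eq_square algebra_simps)
  finally show "(cmod (a * u n + b * v n))\<^sup>2
      \<le> 2 * (cmod a)\<^sup>2 * (cmod (u n))\<^sup>2 + 2 * (cmod b)\<^sup>2 * (cmod (v n))\<^sup>2" .
qed simp

lemma outer_trace_class:
  assumes "square_summable u" "square_summable v"
  shows "(\<lambda>i j. u i * cnj (v j)) \<in> trace_class"
proof -
  define p where "p c = proj (\<lambda>n. (1/2) * u n + (c/2) * v n)" for c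
  have "pos_tc (p c)" for c
    unfolding p_def by (intro pos_tc_proj square_summable_lincomb assms)
  moreover have "(\<lambda>i j. u i * cnj (v j))
      = (\<lambda>i j. (p 1 i j - p (-1) i j) + \<i> * (p \<i> i j - p (-\<i>) i j))"
    \<comment> \<open>polarization\<close>
    unfolding p_def proj_def by (intro ext) (simp add: field_simps)
  ultimately show ?thesis
    unfolding trace_class_def by blast
qed

lemma trace_class_diag_summable:
  assumes "X \<in> trace_class"
  shows "(\<lambda>n. X n n) summable_on UNIV"
proof -
  have pos_diag: "(\<lambda>n. A n n) summable_on UNIV" if "pos_tc A" for A
  proof -
    have "A n n = complex_of_real (Re (A n n))" for n
      using pos_mat_diag_nonneg[of A n] that by (auto simp: pos_tc_def complex_eq_iff less_eq_complex_def)
    moreover have "(\<lambda>n. Re (A n n)) summable_on UNIV"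
      using that pos_mat_diag_nonneg[of A]
      by (auto simp: pos_tc_def summable_on_UNIV_nonneg_real_iff less_eq_complex_def)
    ultimately show ?thesis
      by (metis (no_types, lifting) ext summable_on_of_real)
  qed
  from assms obtain A B C D where "pos_tc A" "pos_tc B" "pos_tc C" "pos_tc D"
    and X: "X = (\<lambda>i j. (A i j - B i j) + \<i> * (C i j - D i j))"
    unfolding trace_class_def by blast
  then have "(\<lambda>n. (A n n + - B n n) + \<i> * (C n n + - D n n)) summable_on UNIV"
    by (intro summable_on_add summable_on_cmult_right summable_on_uminus[THEN iffD2] pos_diag)
  then show ?thesis unfolding X by simp
qed

lemma trace_proj:
  assumes "unit_vec z"
  shows "trace (proj z) = 1"
proof -
  have "((\<lambda>n. complex_of_real ((cmod (z n))\<^sup>2)) has_sum complex_of_real 1) UNIV"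
    using assms unfolding unit_vec_def by (rule has_sum_of_real)
  then show ?thesis
    unfolding trace_def proj_def complex_norm_square by (simp add: infsumI)
qed

section \<open>Positive 2\<times>2 block operators\<close>

lemma pos_block_2_nonneg:
  assumes "pos_block 2 Z" "finite S"
  shows "0 \<le> x * cnj x * sesq S u (Z 0 0) u + cnj x * y * sesq S u (Z 0 1) v
            + x * cnj y * sesq S v (Z 1 0) u + y * cnj y * sesq S v (Z 1 1) v"
proof -
  define w where "w a = (if a = 0 then (\<lambda>i. x * u i) else (\<lambda>i. y * v i))" for a :: nat
  have "0 \<le> (\<Sum>a<2. \<Sum>b<2. sesq S (w a) (Z a b) (w b))"
    using assms unfolding pos_block_iff_sesq by blast
  also have "{..<2::nat} = {0, 1}" by auto
  finally show ?thesis
    by (simp add: w_def sesq_scale mult_ac add_ac)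
qed

definition two_point :: "nat \<Rightarrow> complex \<Rightarrow> nat \<Rightarrow> complex \<Rightarrow> nat \<Rightarrow> complex" where
  "two_point a x a' x' = (\<lambda>i. (if i = a then x else 0) + (if i = a' then x' else 0))"

lemma sesq_two_point:
  assumes "finite S" "a \<in> S" "a' \<in> S" "b \<in> S" "b' \<in> S"
  shows "sesq S (two_point a x a' x') X (two_point b y b' y')
    = cnj x * (X a b * y + X a b' * y') + cnj x' * (X a' b * y + X a' b' * y')"
proof -
  have "(\<Sum>j\<in>S. g j * two_point b y b' y' j) = g b * y + g b' * y'" for g
    unfolding two_point_def using assms
    by (simp add: distrib_left sum.distrib if_distrib[of "\<lambda>t. g _ * t"] cong: if_cong)
  moreover have "(\<Sum>i\<in>S. cnj (two_point a x a' x' i) * g i) = cnj x * g a + cnj x' * g a'" for g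
    unfolding two_point_def using assms
    by (simp add: distrib_right sum.distrib if_distrib[of "\<lambda>t. cnj t * g _"] cong: if_cong)
  ultimately show ?thesis
    unfolding sesq_def by (simp add: mult.assoc flip: sum_distrib_left)
qed

lemma pos_block_2_corner_nonneg: "pos_block 2 Z \<Longrightarrow> 0 \<le> Z 0 0 n n"
  using pos_block_2_nonneg[of Z "{n}" 1 "two_point n 1 n 0" 0] by (simp add: sesq_two_point)

lemma cross_terms_zero_if_nonneg:
  fixes c d r :: complex
  assumes nonneg: "\<And>y. 0 \<le> y*c + cnj y*d + y*cnj y*r"
  shows "c = 0 \<and> d = 0"
proof -
  have real: "s * Re (c + d) + s\<^sup>2 * Re r \<ge> 0" "s * Im (c + d) + s\<^sup>2 * Im r = 0"
    and imag: "s * (- Im (c - d)) + s\<^sup>2 * Re r \<ge> 0" "s * Re (c - d) + s\<^sup>2 * Im r = 0" for s :: real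
    using nonneg[of "complex_of_real s"] nonneg[of "\<i> * complex_of_real s"]
    by (simp_all add: less_eq_complex_def power2_eq_square algebra_simps)
  have "Re (c + d) = 0" "Im (c - d) = 0"
    using linear_coeff_zero_if_quadratic_nonneg real(1) imag(1) by (metis neg_equal_0_iff_equal)+
  moreover have "Im (c + d) = 0" "Re (c - d) = 0"
    using linear_coeff_zero_if_quadratic_nonneg real(2) imag(2) by (metis order_refl)+
  ultimately show ?thesis by (simp add: complex_eq_iff)
qed

lemma cross_term_bound_if_nonneg:
  fixes p c d r :: complex
  assumes nonneg: "\<And>y. 0 \<le> p + y*c + cnj y*d + y*cnj y*r" and "0 < r"
  shows "(cmod c)\<^sup>2 \<le> Re p * Re r"
proof -
  have "Im p = 0" using nonneg[of 0] by (simp add: less_eq_complex_def)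
  moreover have "Im r = 0" "Re r > 0" using \<open>0 < r\<close> by (simp_all add: less_complex_def)
  moreover have "Im (c + d) = 0" "Im (\<i> * c - \<i> * d) = 0"
    using nonneg[of 1] nonneg[of \<i>] \<open>Im p = 0\<close> \<open>Im r = 0\<close> by (simp_all add: less_eq_complex_def)
  ultimately have d: "d = cnj c" and r: "r = complex_of_real (Re r)"
    by (simp_all add: complex_eq_iff)
  define y where "y = - cnj c / complex_of_real (Re r)"
  \<comment> \<open>the minimiser of the quadratic form\<close>
  have "Re (p + y*c + cnj y*d + y*cnj y*r) = Re p - (cmod c)\<^sup>2 / Re r"
    unfolding y_def d using \<open>Re r > 0\<close>
    by (subst r) (simp add: field_simps power2_eq_square complex_norm_square[symmetric] flip: of_real_mult)
  with nonneg[of y] have "0 \<le> Re p - (cmod c)\<^sup>2 / Re r" by (simp add: less_eq_complex_def)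
  then show ?thesis using \<open>Re r > 0\<close> by (simp add: field_simps)
qed

lemma pos_block_2_offdiag_eq_0:
  assumes pos: "pos_block 2 Z" and corner: "\<And>n. Z 0 0 n n = 0"
  shows "Z 0 1 = (\<lambda>i j. 0)"
proof (intro ext)
  fix a b
  have "Z 0 1 a b = 0 \<and> Z 1 0 b a = 0"
  proof (rule cross_terms_zero_if_nonneg)
    fix y
    show "0 \<le> y * Z 0 1 a b + cnj y * Z 1 0 b a + y * cnj y * Z 1 1 b b"
      using pos_block_2_nonneg[OF pos, of "{a, b}" 1 "two_point a 1 a 0" y "two_point b 1 b 0"]
      by (simp add: sesq_two_point corner)
  qed
  then show "Z 0 1 a b = 0" ..
qed

lemma pos_block_2_offdiag_rank_one:
  assumes pos: "pos_block 2 Z"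
    and Z00: "Z 0 0 = (\<lambda>i j. complex_of_real w * proj \<phi> i j)"
    and Z11: "Z 1 1 = (\<lambda>i j. complex_of_real w * proj \<eta> i j)"
    and "0 < w" "\<phi> k \<noteq> 0" "\<eta> k \<noteq> 0"
  obtains c where "cmod c \<le> w" "Z 0 1 = (\<lambda>i j. c * (\<phi> i * cnj (\<eta> j)))"
proof -
  \<comment> \<open>A vector orthogonal to \<phi> (resp. \<eta>) makes the corresponding corner vanish, so the
     cross terms with it must vanish too.\<close>
  have col: "\<phi> a' * Z 0 1 a b = \<phi> a * Z 0 1 a' b" for a a' b
  proof -
    have "\<phi> a' * Z 0 1 a b - \<phi> a * Z 0 1 a' b = 0 \<and> Z 1 0 b a * cnj (\<phi> a') - Z 1 0 b a' * cnj (\<phi> a) = 0"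
    proof (rule cross_terms_zero_if_nonneg)
      fix y
      show "0 \<le> y * (\<phi> a' * Z 0 1 a b - \<phi> a * Z 0 1 a' b)
          + cnj y * (Z 1 0 b a * cnj (\<phi> a') - Z 1 0 b a' * cnj (\<phi> a)) + y * cnj y * Z 1 1 b b"
        using pos_block_2_nonneg[OF pos, of "{a, a', b}" 1 "two_point a (cnj (\<phi> a')) a' (- cnj (\<phi> a))"
            y "two_point b 1 b 0"]
        by (simp add: sesq_two_point Z00 proj_def algebra_simps)
    qed
    then show ?thesis by simp
  qed
  have row: "Z 0 1 a b * cnj (\<eta> b') = Z 0 1 a b' * cnj (\<eta> b)" for a b b'
  proof -
    have "Z 0 1 a b * cnj (\<eta> b') - Z 0 1 a b' * cnj (\<eta> b) = 0 \<and> Z 1 0 b a * \<eta> b' - Z 1 0 b' a * \<eta> b = 0"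
    proof (rule cross_terms_zero_if_nonneg)
      fix y
      show "0 \<le> y * (Z 0 1 a b * cnj (\<eta> b') - Z 0 1 a b' * cnj (\<eta> b))
          + cnj y * (Z 1 0 b a * \<eta> b' - Z 1 0 b' a * \<eta> b) + y * cnj y * Z 0 0 a a"
        using pos_block_2_nonneg[OF pos, of "{a, b, b'}" "cnj y" "two_point a 1 a 0"
            1 "two_point b (cnj (\<eta> b')) b' (- cnj (\<eta> b))"]
        by (simp add: sesq_two_point Z11[unfolded One_nat_def] proj_def algebra_simps)
    qed
    then show ?thesis by simp
  qed
  have corner: "(cmod (Z 0 1 k k))\<^sup>2 \<le> Re (Z 0 0 k k) * Re (Z 1 1 k k)"
  proof (rule cross_term_bound_if_nonneg)
    fix y
    show "0 \<le> Z 0 0 k k + y * Z 0 1 k k + cnj y * Z 1 0 k k + y * cnj y * Z 1 1 k k"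
      using pos_block_2_nonneg[OF pos, of "{k}" 1 "two_point k 1 k 0" y "two_point k 1 k 0"]
      by (simp add: sesq_two_point)
    show "0 < Z 1 1 k k"
      using \<open>0 < w\<close> \<open>\<eta> k \<noteq> 0\<close> by (simp add: Z11[unfolded One_nat_def] proj_def less_complex_def flip: complex_norm_square)
  qed
  define c where "c = Z 0 1 k k / (\<phi> k * cnj (\<eta> k))"
  show ?thesis
  proof
    have "Z 0 0 k k = complex_of_real (w * (cmod (\<phi> k))\<^sup>2)" "Z 1 1 k k = complex_of_real (w * (cmod (\<eta> k))\<^sup>2)"
      by (simp_all add: Z00 Z11[unfolded One_nat_def] proj_def flip: complex_norm_square)
    then have "Re (Z 0 0 k k) * Re (Z 1 1 k k) = (w * (cmod (\<phi> k) * cmod (\<eta> k)))\<^sup>2"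
      by (simp only: Re_complex_of_real power_mult_distrib) (simp only: power2_eq_square mult_ac)
    with corner have "(cmod (Z 0 1 k k))\<^sup>2 \<le> (w * (cmod (\<phi> k) * cmod (\<eta> k)))\<^sup>2"
      by (simp only:)
    moreover have "0 \<le> w * (cmod (\<phi> k) * cmod (\<eta> k))"
      using \<open>0 < w\<close> by simp
    ultimately have "cmod (Z 0 1 k k) \<le> w * (cmod (\<phi> k) * cmod (\<eta> k))"
      by (rule power2_le_imp_le)
    moreover have "0 < cmod (\<phi> k) * cmod (\<eta> k)"
      using \<open>\<phi> k \<noteq> 0\<close> \<open>\<eta> k \<noteq> 0\<close> by simp
    moreover have "cmod c = cmod (Z 0 1 k k) / (cmod (\<phi> k) * cmod (\<eta> k))"
      unfolding c_def by (simp add: norm_divide norm_mult)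
    ultimately show "cmod c \<le> w"
      by (simp add: pos_divide_le_eq)
    show "Z 0 1 = (\<lambda>i j. c * (\<phi> i * cnj (\<eta> j)))"
    proof (intro ext)
      fix i j
      have "Z 0 1 i j = \<phi> i * Z 0 1 k j / \<phi> k"
        using col[of i k j] \<open>\<phi> k \<noteq> 0\<close> by (simp add: eq_divide_eq mult.commute)
      also have "Z 0 1 k j = Z 0 1 k k * cnj (\<eta> j) / cnj (\<eta> k)"
        using row[of k j k] \<open>\<eta> k \<noteq> 0\<close> by (simp add: eq_divide_eq)
      finally show "Z 0 1 i j = c * (\<phi> i * cnj (\<eta> j))"
        by (simp add: c_def mult_ac)
    qed
  qed
qed

section \<open>U(1)-invariant operations\<close>

definition rotv :: "real \<Rightarrow> (nat \<Rightarrow> complex) \<Rightarrow> nat \<Rightarrow> complex" where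
  "rotv t z = (\<lambda>n. cis (t * real n) * z n)"

lemma rot_scaled_proj: "rot t (\<lambda>i j. c * proj z i j) = (\<lambda>i j. c * proj (rotv t z) i j)"
  unfolding rot_def proj_def rotv_def by (auto simp: fun_eq_iff cis_cnj mult_ac)

lemma rot_proj: "rot t (proj z) = proj (rotv t z)"
  using rot_scaled_proj[of t 1 z] by simp

lemma square_summable_rotv: "square_summable z \<Longrightarrow> square_summable (rotv t z)"
  unfolding square_summable_def rotv_def by (simp add: norm_mult)

text \<open>\<langle>x| e^(-itN) |x\<rangle>, the trace of |x\<rangle>\<langle>rotv t x| by trace_outer_rotv.\<close>

abbreviation state_char :: "(nat \<Rightarrow> complex) \<Rightarrow> real \<Rightarrow> complex" where
  "state_char x \<equiv> char_fun (\<lambda>n. (cmod (x n))\<^sup>2)"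

abbreviation state_variance :: "(nat \<Rightarrow> complex) \<Rightarrow> real" where
  "state_variance x \<equiv> finite_variance_distribution.variance (\<lambda>n. (cmod (x n))\<^sup>2)"

lemma finite_variance_distribution_state:
  assumes "unit_vec x" "fin_N2 x"
  shows "finite_variance_distribution (\<lambda>n. (cmod (x n))\<^sup>2)"
  using assms unfolding unit_vec_def fin_N2_def
  by unfold_locales (simp_all add: summable_on_imp_summable)

lemma infsum_eq_suminf_nat: "f summable_on (UNIV::nat set) \<Longrightarrow> infsum f UNIV = suminf f"
  by (metis has_sum_imp_sums has_sum_infsum sums_unique)

lemma Vfr_eq_state_variance:
  assumes "unit_vec x" "fin_N2 x"
  shows "Vfr x = 4 * state_variance x"
proof -
  interpret finite_variance_distribution "\<lambda>n. (cmod (x n))\<^sup>2"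
    using assms by (rule finite_variance_distribution_state)
  have "(\<lambda>n. real n * (cmod (x n))\<^sup>2) summable_on UNIV"
    using summable_first_moment by (simp add: summable_on_UNIV_nonneg_real_iff)
  then have "expN x = mean"
    unfolding expN_def mean_def by (rule infsum_eq_suminf_nat)
  moreover have "expN2 x = (\<Sum>n. (real n)\<^sup>2 * (cmod (x n))\<^sup>2)"
    using assms(2) unfolding expN2_def fin_N2_def by (rule infsum_eq_suminf_nat)
  ultimately show ?thesis
    unfolding Vfr_def variance_eq by simp
qed

lemma trace_outer_rotv: "trace (\<lambda>i j. x i * cnj (rotv t x j)) = state_char x t"
proof -
  have "x n * cnj (rotv t x n) = complex_of_real ((cmod (x n))\<^sup>2) * cis (- t * real n)" for n
    unfolding rotv_def by (simp add: cis_cnj mult_ac flip: complex_norm_square)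
  then have "trace (\<lambda>i j. x i * cnj (rotv t x j))
      = (\<Sum>\<^sub>\<infinity>n. complex_of_real ((cmod (x n))\<^sup>2) * cis (- t * real n))"
    unfolding trace_def by presburger
  also have "\<dots> = state_char x t"
    unfolding char_fun_def ..
  finally show ?thesis .
qed

definition pair_block :: "(nat \<Rightarrow> complex) \<Rightarrow> (nat \<Rightarrow> complex) \<Rightarrow> nat \<Rightarrow> nat \<Rightarrow> mat" where
  "pair_block x y a b = (\<lambda>i j. (if a = 0 then x else y) i * cnj ((if b = 0 then x else y) j))"

lemma completely_positive_pair_block:
  assumes "completely_positive G" "square_summable x" "square_summable y"
  shows "pos_block 2 (\<lambda>a b. G (pair_block x y a b))"
proof -
  have "pos_tc (pair_block x y a a)" for a
    unfolding pair_block_def using pos_tc_proj[OF assms(2)] pos_tc_proj[OF assms(3)]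
    by (cases "a = 0") (simp_all add: proj_def)
  moreover have "pos_block 2 (pair_block x y)"
    unfolding pair_block_def by (rule pos_block_outer)
  ultimately show ?thesis
    using assms(1) unfolding completely_positive_def by blast
qed

lemma u1_operation_pair_block:
  fixes t :: real
  assumes "u1_operation G" "square_summable \<psi>"
  defines "Z \<equiv> \<lambda>a b. G (pair_block \<psi> (rotv t \<psi>) a b)"
  shows "pos_block 2 Z" "Z 0 0 = G (proj \<psi>)" "Z 1 1 = rot t (G (proj \<psi>))"
    and "Z 0 1 = G (\<lambda>i j. \<psi> i * cnj (rotv t \<psi> j))"
proof -
  have "completely_positive G" "G (rot t (proj \<psi>)) = rot t (G (proj \<psi>))"
    using assms(1) pos_tc_imp_trace_class[OF pos_tc_proj[OF assms(2)]]
    unfolding u1_operation_def by blast+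
  moreover have "pair_block \<psi> (rotv t \<psi>) 1 1 = rot t (proj \<psi>)"
    unfolding rot_proj by (simp add: pair_block_def proj_def)
  ultimately show "pos_block 2 Z" "Z 1 1 = rot t (G (proj \<psi>))"
    unfolding Z_def using completely_positive_pair_block assms(2) square_summable_rotv by simp_all
  show "Z 0 0 = G (proj \<psi>)" "Z 0 1 = G (\<lambda>i j. \<psi> i * cnj (rotv t \<psi> j))"
    unfolding Z_def by (simp_all add: pair_block_def proj_def)
qed

lemma u1_operation_proj_trace_class:
  "u1_operation G \<Longrightarrow> square_summable \<psi> \<Longrightarrow> G (proj \<psi>) \<in> trace_class"
  using pos_tc_imp_trace_class[OF pos_tc_proj] unfolding u1_operation_def linear_tc_def by blast

lemma u1_operation_trace_nonneg:
  assumes "u1_operation G" "square_summable \<psi>"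
  shows "0 \<le> trace (G (proj \<psi>))"
proof -
  have "G (proj \<psi>) \<in> trace_class"
    using assms by (rule u1_operation_proj_trace_class)
  moreover have "0 \<le> G (proj \<psi>) n n" for n
    using pos_block_2_corner_nonneg u1_operation_pair_block[OF assms, where t = 0] by metis
  ultimately show ?thesis
    unfolding trace_def by (intro infsum_nonneg_complex trace_class_diag_summable)
qed

lemma u1_operation_offdiag_trace_eq_0:
  assumes "u1_operation G" "square_summable \<psi>" "trace (G (proj \<psi>)) = 0"
  shows "trace (G (\<lambda>i j. \<psi> i * cnj (rotv t \<psi> j))) = 0"
proof -
  note Z = u1_operation_pair_block[OF assms(1,2), where t = t]
  have "G (proj \<psi>) \<in> trace_class"
    using assms(1,2) by (rule u1_operation_proj_trace_class)
  then have "G (proj \<psi>) n n = 0" for n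
    using assms(3) pos_block_2_corner_nonneg[OF Z(1)] unfolding trace_def Z(2)
    by (intro nonneg_infsum_le_0D_complex[where A=UNIV] trace_class_diag_summable) simp_all
  then show ?thesis
    using pos_block_2_offdiag_eq_0[OF Z(1)] unfolding Z(2,4) trace_def by simp
qed

lemma u1_operation_offdiag_trace_le:
  assumes "u1_operation G" "square_summable \<psi>" "0 < w" "unit_vec \<phi>"
    and pure: "G (proj \<psi>) = (\<lambda>i j. complex_of_real w * proj \<phi> i j)"
  shows "cmod (trace (G (\<lambda>i j. \<psi> i * cnj (rotv t \<psi> j)))) \<le> w * cmod (state_char \<phi> t)"
proof -
  note Z = u1_operation_pair_block[OF assms(1,2), where t = t]
  obtain k where "\<phi> k \<noteq> 0"
    using \<open>unit_vec \<phi>\<close> has_sum_0[of UNIV "\<lambda>n. (cmod (\<phi> n))\<^sup>2"]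
    unfolding unit_vec_def by (metis has_sum_unique norm_zero zero_neq_one zero_power2)
  moreover have "rotv t \<phi> k \<noteq> 0"
    using \<open>\<phi> k \<noteq> 0\<close> by (simp add: rotv_def)
  ultimately obtain c where "cmod c \<le> w" and offdiag: "G (\<lambda>i j. \<psi> i * cnj (rotv t \<psi> j))
      = (\<lambda>i j. c * (\<phi> i * cnj (rotv t \<phi> j)))"
    using pos_block_2_offdiag_rank_one[OF Z(1)] \<open>0 < w\<close>
    unfolding Z(2,3,4) pure rot_scaled_proj by metis
  have "trace (G (\<lambda>i j. \<psi> i * cnj (rotv t \<psi> j))) = c * state_char \<phi> t"
    unfolding offdiag trace_outer_rotv[symmetric] trace_def by (rule infsum_cmult_right')
  with \<open>cmod c \<le> w\<close> show ?thesis
    by (simp add: norm_mult mult_right_mono)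
qed

section \<open>Measurements with pure outcomes\<close>

locale pure_u1_measurement =
  fixes E :: "'m::countable \<Rightarrow> mat \<Rightarrow> mat"
    and \<psi> :: "nat \<Rightarrow> complex"
    and \<phi> :: "'m \<Rightarrow> nat \<Rightarrow> complex"
  assumes measurement: "u1_measurement E"
    and unit_vec_input: "unit_vec \<psi>" and fin_N2_input: "fin_N2 \<psi>"
    and pure_outcomes: "\<And>\<mu>. 0 < outcome_weight E \<psi> \<mu> \<Longrightarrow>
           unit_vec (\<phi> \<mu>) \<and> fin_N2 (\<phi> \<mu>) \<and>
           E \<mu> (proj \<psi>) = (\<lambda>m n. complex_of_real (outcome_weight E \<psi> \<mu>) * proj (\<phi> \<mu>) m n)"
begin

abbreviation w :: "'m \<Rightarrow> real" where "w \<equiv> outcome_weight E \<psi>"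

abbreviation W :: "'m set" where "W \<equiv> {\<mu>. 0 < w \<mu>}"

lemma u1_operation_outcome: "u1_operation (E \<mu>)"
  using measurement unfolding u1_measurement_def by blast

lemma has_sum_outcome_traces: "X \<in> trace_class \<Longrightarrow> ((\<lambda>\<mu>. trace (E \<mu> X)) has_sum trace X) UNIV"
  using measurement unfolding u1_measurement_def by blast

lemma square_summable_input: "square_summable \<psi>"
  using unit_vec_input unfolding unit_vec_def square_summable_def summable_on_def by blast

lemma weight_nonneg: "0 \<le> w \<mu>"
  using u1_operation_trace_nonneg[OF u1_operation_outcome square_summable_input]
  unfolding outcome_weight_def by (simp add: less_eq_complex_def)

lemma has_sum_weight: "(w has_sum 1) W"
proof -
  have "((\<lambda>\<mu>. Re (trace (E \<mu> (proj \<psi>)))) has_sum Re (trace (proj \<psi>))) UNIV"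
    by (intro has_sum_Re has_sum_outcome_traces pos_tc_imp_trace_class pos_tc_proj square_summable_input)
  then have "(w has_sum 1) UNIV"
    unfolding outcome_weight_def trace_proj[OF unit_vec_input] by simp
  moreover have "(w has_sum 1) UNIV \<longleftrightarrow> (w has_sum 1) W"
    by (rule has_sum_cong_neutral) (auto simp: not_less intro: antisym weight_nonneg)
  ultimately show ?thesis by blast
qed

lemma offdiag_trace_bound:
  "cmod (trace (E \<mu> (\<lambda>i j. \<psi> i * cnj (rotv t \<psi> j))))
     \<le> (if \<mu> \<in> W then w \<mu> * cmod (state_char (\<phi> \<mu>) t) else 0)"
proof (cases "\<mu> \<in> W")
  case True
  then show ?thesis
    using u1_operation_offdiag_trace_le[OF u1_operation_outcome square_summable_input] pure_outcomes by auto
next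
  case False
  then have "trace (E \<mu> (proj \<psi>)) = 0"
    using u1_operation_trace_nonneg[OF u1_operation_outcome square_summable_input, of \<mu>]
    unfolding outcome_weight_def by (auto simp: less_eq_complex_def complex_eq_iff)
  with False show ?thesis
    using u1_operation_offdiag_trace_eq_0[OF u1_operation_outcome square_summable_input] by simp
qed

lemma summable_weighted_char: "(\<lambda>\<mu>. w \<mu> * cmod (state_char (\<phi> \<mu>) t)) summable_on W"
proof (rule summable_on_comparison_test)
  show "w summable_on W" using has_sum_weight by (auto simp: summable_on_def)
next
  fix \<mu> assume "\<mu> \<in> W"
  then interpret finite_variance_distribution "\<lambda>n. (cmod (\<phi> \<mu> n))\<^sup>2"
    using pure_outcomes finite_variance_distribution_state by auto
  show "w \<mu> * cmod (state_char (\<phi> \<mu>) t) \<le> w \<mu>"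
    using norm_char_fun_le_1 weight_nonneg[of \<mu>] by (simp add: mult_left_le)
next
  show "0 \<le> w \<mu> * cmod (state_char (\<phi> \<mu>) t)" for \<mu>
    using weight_nonneg by simp
qed

lemma norm_char_le_weighted_sum:
  "cmod (state_char \<psi> t) \<le> (\<Sum>\<^sub>\<infinity>\<mu>\<in>W. w \<mu> * cmod (state_char (\<phi> \<mu>) t))"
proof -
  let ?g = "\<lambda>\<mu>. w \<mu> * cmod (state_char (\<phi> \<mu>) t)"
  have "(\<lambda>i j. \<psi> i * cnj (rotv t \<psi> j)) \<in> trace_class"
    by (intro outer_trace_class square_summable_rotv square_summable_input)
  from has_sum_outcome_traces[OF this]
  have traces: "((\<lambda>\<mu>. trace (E \<mu> (\<lambda>i j. \<psi> i * cnj (rotv t \<psi> j)))) has_sum state_char \<psi> t) UNIV"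
    unfolding trace_outer_rotv .
  have "((\<lambda>\<mu>. if \<mu> \<in> W then ?g \<mu> else 0) has_sum infsum ?g W) UNIV
      \<longleftrightarrow> (?g has_sum infsum ?g W) W"
    by (rule has_sum_cong_neutral) auto
  then have "((\<lambda>\<mu>. if \<mu> \<in> W then ?g \<mu> else 0) has_sum infsum ?g W) UNIV"
    using has_sum_infsum[OF summable_weighted_char] by blast
  with traces show ?thesis
    by (rule norm_infsum_le[OF _ _ offdiag_trace_bound])
qed

lemma finite_char_deficit_le:
  assumes "finite F" "F \<subseteq> W"
  shows "(\<Sum>\<mu>\<in>F. w \<mu> * (1 - cmod (state_char (\<phi> \<mu>) t))) \<le> 1 - cmod (state_char \<psi> t)"
proof -
  let ?g = "\<lambda>\<mu>. w \<mu> * cmod (state_char (\<phi> \<mu>) t)"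
  have "((\<lambda>\<mu>. w \<mu> + - ?g \<mu>) has_sum (1 + - infsum ?g W)) W"
    using has_sum_weight has_sum_infsum[OF summable_weighted_char]
    by (intro has_sum_add) (simp_all add: has_sum_uminus)
  then have has_sum: "((\<lambda>\<mu>. w \<mu> * (1 - cmod (state_char (\<phi> \<mu>) t))) has_sum (1 - infsum ?g W)) W"
    by (simp add: right_diff_distrib)
  have "0 \<le> w \<mu> * (1 - cmod (state_char (\<phi> \<mu>) t))" if "\<mu> \<in> W" for \<mu>
  proof -
    interpret finite_variance_distribution "\<lambda>n. (cmod (\<phi> \<mu> n))\<^sup>2"
      using that pure_outcomes finite_variance_distribution_state by auto
    show ?thesis using norm_char_fun_le_1 weight_nonneg[of \<mu>] by simp
  qed
  then have "(\<Sum>\<mu>\<in>F. w \<mu> * (1 - cmod (state_char (\<phi> \<mu>) t))) \<le> 1 - infsum ?g W"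
    by (rule finite_sum_le_has_sum[OF has_sum assms]) blast
  also have "\<dots> \<le> 1 - cmod (state_char \<psi> t)"
    using norm_char_le_weighted_sum by simp
  finally show ?thesis .
qed

lemma finite_weighted_variance_le:
  assumes "finite F" "F \<subseteq> W"
  shows "(\<Sum>\<mu>\<in>F. w \<mu> * state_variance (\<phi> \<mu>)) \<le> state_variance \<psi>"
proof -
  interpret input: finite_variance_distribution "\<lambda>n. (cmod (\<psi> n))\<^sup>2"
    using unit_vec_input fin_N2_input by (rule finite_variance_distribution_state)
  have bound: "(\<Sum>\<mu>\<in>F. w \<mu> * ((1 - (cmod (state_char (\<phi> \<mu>) t))\<^sup>2) / t\<^sup>2)) \<le> state_variance \<psi>"
    if "t \<noteq> 0" for t
  proof -
    have "(\<Sum>\<mu>\<in>F. w \<mu> * (1 - (cmod (state_char (\<phi> \<mu>) t))\<^sup>2))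
        \<le> (\<Sum>\<mu>\<in>F. 2 * (w \<mu> * (1 - cmod (state_char (\<phi> \<mu>) t))))"
    proof (rule sum_mono)
      fix \<mu>
      have "1 - (cmod (state_char (\<phi> \<mu>) t))\<^sup>2 \<le> 2 * (1 - cmod (state_char (\<phi> \<mu>) t))"
        using zero_le_power2[of "1 - cmod (state_char (\<phi> \<mu>) t)"] by (simp add: power2_eq_square algebra_simps)
      from mult_left_mono[OF this weight_nonneg[of \<mu>]]
      show "w \<mu> * (1 - (cmod (state_char (\<phi> \<mu>) t))\<^sup>2) \<le> 2 * (w \<mu> * (1 - cmod (state_char (\<phi> \<mu>) t)))"
        by (simp only: mult.left_commute)
    qed
    also have "\<dots> \<le> 2 * (1 - cmod (state_char \<psi> t))"
      using finite_char_deficit_le[OF assms, of t] by (simp flip: sum_distrib_left)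
    also have "\<dots> \<le> t\<^sup>2 * state_variance \<psi>"
      using input.one_minus_norm_char_fun_le[of t] by simp
    finally show ?thesis
      using that by (simp add: sum_divide_distrib[symmetric] sum_distrib_left[symmetric] divide_le_eq mult.commute)
  qed
  have "((\<lambda>t. \<Sum>\<mu>\<in>F. w \<mu> * ((1 - (cmod (state_char (\<phi> \<mu>) t))\<^sup>2) / t\<^sup>2))
      \<longlongrightarrow> (\<Sum>\<mu>\<in>F. w \<mu> * state_variance (\<phi> \<mu>))) (at 0)"
  proof (intro tendsto_sum tendsto_mult_left)
    fix \<mu> assume "\<mu> \<in> F"
    then interpret finite_variance_distribution "\<lambda>n. (cmod (\<phi> \<mu> n))\<^sup>2"
      using assms pure_outcomes finite_variance_distribution_state by blast
    show "((\<lambda>t. (1 - (cmod (state_char (\<phi> \<mu>) t))\<^sup>2) / t\<^sup>2) \<longlongrightarrow> state_variance (\<phi> \<mu>)) (at 0)"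
      by (rule tendsto_norm_char_fun_deficit)
  qed
  then show ?thesis
    by (rule tendsto_upperbound) (use bound in \<open>auto simp: eventually_at_filter\<close>)
qed

lemma finite_weighted_Vfr_le:
  assumes "finite F" "F \<subseteq> W"
  shows "(\<Sum>\<mu>\<in>F. w \<mu> * Vfr (\<phi> \<mu>)) \<le> Vfr \<psi>"
proof -
  have "(\<Sum>\<mu>\<in>F. w \<mu> * Vfr (\<phi> \<mu>)) = 4 * (\<Sum>\<mu>\<in>F. w \<mu> * state_variance (\<phi> \<mu>))"
    unfolding sum_distrib_left using assms pure_outcomes Vfr_eq_state_variance
    by (intro sum.cong) auto
  also have "\<dots> \<le> Vfr \<psi>"
    using finite_weighted_variance_le[OF assms] Vfr_eq_state_variance unit_vec_input fin_N2_input
    by simp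
  finally show ?thesis .
qed

lemma weighted_Vfr_nonneg: "\<mu> \<in> W \<Longrightarrow> 0 \<le> w \<mu> * Vfr (\<phi> \<mu>)"
  using pure_outcomes Vfr_eq_state_variance finite_variance_distribution.variance_nonneg
    finite_variance_distribution_state weight_nonneg by fastforce

end

theorem lemma8:
  fixes E :: "'m::countable \<Rightarrow> mat \<Rightarrow> mat"
    and \<psi> :: "nat \<Rightarrow> complex"
    and \<phi> :: "'m \<Rightarrow> nat \<Rightarrow> complex"
  assumes "u1_measurement E"
    and "unit_vec \<psi>" and "fin_N2 \<psi>"
    and "\<forall>\<mu>. outcome_weight E \<psi> \<mu> > 0 \<longrightarrow>
           unit_vec (\<phi> \<mu>) \<and> fin_N2 (\<phi> \<mu>) \<and>
           E \<mu> (proj \<psi>) = (\<lambda>m n. complex_of_real (outcome_weight E \<psi> \<mu>) * proj (\<phi> \<mu>) m n)"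
  shows "(\<lambda>\<mu>. outcome_weight E \<psi> \<mu> * Vfr (\<phi> \<mu>)) summable_on {\<mu>. outcome_weight E \<psi> \<mu> > 0}
    \<and> (\<Sum>\<^sub>\<infinity>\<mu>\<in>{\<mu>. outcome_weight E \<psi> \<mu> > 0}. outcome_weight E \<psi> \<mu> * Vfr (\<phi> \<mu>)) \<le> Vfr \<psi>"
proof -
  interpret pure_u1_measurement E \<psi> \<phi>
    using assms by unfold_locales blast+
  have "(\<lambda>\<mu>. w \<mu> * Vfr (\<phi> \<mu>)) summable_on W"
    using weighted_Vfr_nonneg finite_weighted_Vfr_le
    by (intro nonneg_bdd_above_summable_on bdd_aboveI2) auto
  moreover from this have "(\<Sum>\<^sub>\<infinity>\<mu>\<in>W. w \<mu> * Vfr (\<phi> \<mu>)) \<le> Vfr \<psi>"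
    using finite_weighted_Vfr_le by (rule infsum_le_finite_sums)
  ultimately show ?thesis by blast
qed

end
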